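(* Let $n\ge 2$, let $T=\{1,\dots,n\}$ and let $\mathcal T$ be a topology on $T$. Fix an integer $k\ge 1$ and let $X_{k-1}$ be the set of points $\alpha\in T\setminus\{n\}$ whose covering set $\alpha^{*}$ is an $m$-system for some $m<k$. Let $P$ be a $k$-system of $\mathcal T$ with $P\setminus\{n\}\subseteq X_{k-1}$. Then either $P$ is a union of $k'$-systems with $k'<k$, or $P=n^{*}$.
   Context: For $\alpha\in T$, $\alpha^{*}$ (the covering set of $\alpha$) denotes the smallest open set of $\mathcal T$ containing $\alpha$. For an integer $m\ge 0$, an $m$-system is an open set $P$ of $\mathcal T$ such that $P\setminus\{n\}$ has exactly $m$ points. *)

theory Defs
  imports "HOL-Analysis.Analysis"
begin

text \<open>Covering set: the smallest open set containing a (the intersection of all open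
sets containing a; in a finite topology this is itself open).\<close>
definition covering_set :: "'a topology \<Rightarrow> 'a \<Rightarrow> 'a set" where
  "covering_set X a = \<Inter> {U. openin X U \<and> a \<in> U}"

definition m_system :: "nat topology \<Rightarrow> nat \<Rightarrow> nat \<Rightarrow> nat set \<Rightarrow> bool" where
  "m_system X n m P \<longleftrightarrow> openin X P \<and> finite (P - {n}) \<and> card (P - {n}) = m"

definition X_set :: "nat topology \<Rightarrow> nat \<Rightarrow> nat \<Rightarrow> nat set" where
  "X_set X n k = {a \<in> topspace X - {n}. \<exists>m<k. m_system X n m (covering_set X a)}"

end

theory Submission
  imports Defs
begin

text \<open>Every point of P other than n has a covering set that is a k'-system with k' < k, and
  these covering sets exhaust P - {n}. If n lies in P, then n* \<subseteq> P is itself an m-system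
  with m \<le> k: either m < k and n* can be added to the family, or m = k and the counting
  forces P = n*.\<close>

lemma covering_set_subset_openin:
  "openin X U \<Longrightarrow> a \<in> U \<Longrightarrow> covering_set X a \<subseteq> U"
  unfolding covering_set_def by blast

lemma mem_covering_set: "a \<in> topspace X \<Longrightarrow> a \<in> covering_set X a"
  unfolding covering_set_def by auto

lemma openin_covering_set:
  assumes "finite (topspace X)" "a \<in> topspace X"
  shows "openin X (covering_set X a)"
proof -
  have "{U. openin X U \<and> a \<in> U} \<subseteq> Pow (topspace X)"
    using openin_subset by blast
  then have "finite {U. openin X U \<and> a \<in> U}"
    using assms(1) by (meson finite_Pow_iff finite_subset)
  moreover have "topspace X \<in> {U. openin X U \<and> a \<in> U}"
    using assms(2) by simp
  then have "{U. openin X U \<and> a \<in> U} \<noteq> {}"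
    by blast
  ultimately show ?thesis
    unfolding covering_set_def by (rule openin_Inter) blast
qed

lemma Union_covering_sets_openin:
  assumes "openin X U"
  shows "\<Union> (covering_set X ` U) = U"
proof
  show "\<Union> (covering_set X ` U) \<subseteq> U"
    using covering_set_subset_openin[OF assms] by (simp add: UN_subset_iff)
  show "U \<subseteq> \<Union> (covering_set X ` U)"
  proof
    fix x
    assume "x \<in> U"
    then have "x \<in> topspace X"
      using openin_subset[OF assms] by blast
    then have "x \<in> covering_set X x"
      by (rule mem_covering_set)
    with \<open>x \<in> U\<close> show "x \<in> \<Union> (covering_set X ` U)"
      by blast
  qed
qed

lemma m_system_covering_set:
  assumes "finite (topspace X)" "m_system X n k P" "n \<in> P"
  shows "m_system X n (card (covering_set X n - {n})) (covering_set X n)"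
    and "card (covering_set X n - {n}) \<le> k"
proof -
  have P: "openin X P" "finite (P - {n})" "card (P - {n}) = k"
    using assms(2) unfolding m_system_def by auto
  have sub: "covering_set X n - {n} \<subseteq> P - {n}"
    using covering_set_subset_openin[OF P(1) assms(3)] by blast
  have "n \<in> topspace X"
    using openin_subset[OF P(1)] assms(3) by blast
  then have "openin X (covering_set X n)"
    using assms(1) by (rule openin_covering_set[rotated])
  moreover have "finite (covering_set X n - {n})"
    using finite_subset[OF sub P(2)] .
  ultimately show "m_system X n (card (covering_set X n - {n})) (covering_set X n)"
    unfolding m_system_def by simp
  show "card (covering_set X n - {n}) \<le> k"
    using card_mono[OF P(2) sub] P(3) by simp
qed

lemma m_system_subset_eq:
  assumes "m_system X n k P" "m_system X n k Q" "Q \<subseteq> P" "n \<in> Q"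
  shows "Q = P"
proof -
  have "Q - {n} \<subseteq> P - {n}" "finite (P - {n})" "card (Q - {n}) = card (P - {n})"
    using assms unfolding m_system_def by auto
  then have "Q - {n} = P - {n}"
    by (metis card_subset_eq)
  then show ?thesis
    using assms(3,4) by blast
qed

theorem theorem1:
  fixes X :: "nat topology" and n k :: nat and P :: "nat set"
  assumes "n \<ge> 2"
    and "topspace X = {1..n}"
    and "k \<ge> 1"
    and "m_system X n k P"
    and "P - {n} \<subseteq> X_set X n k"
  shows "(\<exists>F. P = \<Union>F \<and> (\<forall>Q\<in>F. \<exists>k'<k. m_system X n k' Q))
         \<or> P = covering_set X n"
proof -
  have openP: "openin X P"
    using assms(4) unfolding m_system_def by blast
  have fin: "finite (topspace X)"
    using assms(2) by simp
  define F where "F = covering_set X ` (P - {n})"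
  have F_small: "\<forall>Q\<in>F. \<exists>k'<k. m_system X n k' Q"
    using assms(5) unfolding F_def X_set_def by auto
  show ?thesis
  proof (cases "n \<in> P")
    case False
    then have "P = \<Union>F"
      unfolding F_def using Union_covering_sets_openin[OF openP] by simp
    with F_small show ?thesis by blast
  next
    case True
    define m where "m = card (covering_set X n - {n})"
    have C: "m_system X n m (covering_set X n)" "m \<le> k"
      using m_system_covering_set[OF fin assms(4) True] unfolding m_def by auto
    show ?thesis
    proof (cases "m < k")
      case True
      have "P = \<Union> (covering_set X ` insert n (P - {n}))"
        using Union_covering_sets_openin[OF openP] \<open>n \<in> P\<close> by (simp add: insert_absorb)
      also have "\<dots> = \<Union> (insert (covering_set X n) F)"
        unfolding F_def by (simp only: image_insert)
      finally have "P = \<Union> (insert (covering_set X n) F)" .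
      with F_small C(1) \<open>m < k\<close> show ?thesis by blast
    next
      case False
      with C have "m_system X n k (covering_set X n)"
        by simp
      moreover have "n \<in> covering_set X n"
        using openin_subset[OF openP] True by (blast intro: mem_covering_set)
      ultimately have "covering_set X n = P"
        using m_system_subset_eq[OF assms(4)] covering_set_subset_openin[OF openP True] by blast
      then show ?thesis by simp
    qed
  qed
qed

end
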